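(* There exist a rational polyhedron $P\subseteq\mathbb{R}^3$ and a cubic polynomial $f:\mathbb{R}^3\to\mathbb{R}$ such that $f$ is unbounded on some ray of $P$, but for every ray $R(y,d)$ of $P$ on which $f$ is unbounded, the vector $d$ is not rational. (For instance, $P=\operatorname{cone}\{y\in\mathbb{R}^3 : (y_1,y_2)\in[1.25,1.26]\times[1.58,1.59],\ y_3=1\}$ and $f(y) = -2y_1^3-y_2^3+6y_1y_2y_3-4y_3^3+y_1y_3$.)
   Context: For a polyhedron $P\subseteq\mathbb{R}^n$ with recession cone $\operatorname{rec} P$, a ray of $P$ is a set $R(x,d):=\{x+\lambda d:\lambda\ge 0\}$ with $x\in P$ and $d\in\operatorname{rec}P\setminus\{0\}$. A function $f$ is unbounded on a set $S$ if $\sup_{x\in S} f(x)=+\infty$. *)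

theory Defs
  imports "HOL-Analysis.Analysis"
begin

definition rational_vec :: "real^3 \<Rightarrow> bool" where
  "rational_vec v \<longleftrightarrow> (\<forall>i. v $ i \<in> \<rat>)"

definition rational_polyhedron :: "(real^3) set \<Rightarrow> bool" where
  "rational_polyhedron P \<longleftrightarrow>
     (\<exists>F. finite F \<and> (\<forall>(a,b)\<in>F. rational_vec a \<and> b \<in> \<rat>) \<and>
          P = {x. \<forall>(a,b)\<in>F. a \<bullet> x \<le> b})"

definition rec_cone :: "(real^3) set \<Rightarrow> (real^3) set" where
  "rec_cone P = {d. \<forall>x\<in>P. \<forall>t::real. t \<ge> 0 \<longrightarrow> x + t *\<^sub>R d \<in> P}"

definition ray :: "real^3 \<Rightarrow> real^3 \<Rightarrow> (real^3) set" where
  "ray x d = {x + t *\<^sub>R d | t::real. t \<ge> 0}"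

definition unbounded_on :: "(real^3 \<Rightarrow> real) \<Rightarrow> (real^3) set \<Rightarrow> bool" where
  "unbounded_on f S \<longleftrightarrow> \<not> bdd_above (f ` S)"

definition cubic_poly :: "(real^3 \<Rightarrow> real) \<Rightarrow> bool" where
  "cubic_poly f \<longleftrightarrow>
     (\<exists>c :: nat \<Rightarrow> nat \<Rightarrow> nat \<Rightarrow> real.
        (\<forall>i j k. i + j + k > 3 \<longrightarrow> c i j k = 0) \<and>
        (\<exists>i j k. i + j + k = 3 \<and> c i j k \<noteq> 0) \<and>
        (\<forall>x. f x = (\<Sum>i\<le>3. \<Sum>j\<le>3. \<Sum>k\<le>3. c i j k * (x$1)^i * (x$2)^j * (x$3)^k)))"

end

theory Submission
  imports Defs "HOL-Real_Asymp.Real_Asymp"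
begin

text \<open>
  Take P to be the nonnegative orthant and f y = -2 y1^3 - y2^3 + 6 y1 y2 y3 - 4 y3^3 + y1 y3.
  With a the real cube root of 2, the cubic part of f at a direction d is 3uvw - (u^3 + v^3 + w^3)
  for u = d2, v = a d1, w = a^2 d3. By AM-GM it is negative on the orthant unless u = v = w,
  i.e. unless d is a multiple of (a, a^2, 1), and no such nonzero multiple is rational. Hence f
  is bounded above on every ray with a rational direction, while on the ray from 0 in direction
  (a, a^2, 1) the cubic part vanishes and f equals a t^2.
\<close>

lemma prime_nth_root_not_rat:
  fixes p :: nat and x :: real
  assumes "prime p" and "n \<ge> 2" and "x ^ n = p"
  shows "x \<notin> \<rat>"
proof
  assume "x \<in> \<rat>"
  then obtain m k :: nat where k: "k \<noteq> 0" and x: "\<bar>x\<bar> = m / k" and "coprime m k"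
    by (rule Rats_abs_nat_div_natE)
  have "real (m ^ n) = \<bar>x\<bar> ^ n * k ^ n"
    using k x by (simp add: power_divide)
  also have "\<bar>x\<bar> ^ n = p"
    using assms(3) by (metis of_nat_0_le_iff power_abs abs_of_nonneg)
  finally have eq: "m ^ n = p * k ^ n"
    by (metis of_nat_eq_iff of_nat_mult of_nat_power)
  have "p dvd m"
    using eq \<open>prime p\<close> by (metis dvd_triv_left prime_dvd_power)
  then obtain j where "m = p * j" ..
  moreover have "p ^ n = p * (p * p ^ (n - 2))"
    using assms(2) by (metis power_Suc le_add_diff_inverse2 add_2_eq_Suc')
  ultimately have "p * (p * p ^ (n - 2) * j ^ n) = p * k ^ n"
    using eq by (simp add: power_mult_distrib ac_simps)
  then have "k ^ n = p * (p ^ (n - 2) * j ^ n)"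
    using prime_gt_0_nat[OF \<open>prime p\<close>] by (simp add: ac_simps)
  then have "p dvd k"
    using \<open>prime p\<close> by (metis dvd_triv_left prime_dvd_power)
  with \<open>p dvd m\<close> \<open>coprime m k\<close> \<open>prime p\<close> show False
    by (metis coprime_common_divisor not_prime_unit)
qed

lemma three_mult_lt_sum_cubes:
  fixes a b c :: "'a::linordered_idom"
  assumes "0 \<le> a" "0 \<le> b" "0 \<le> c" and "\<not> (a = b \<and> b = c)"
  shows "3 * a * b * c < a ^ 3 + b ^ 3 + c ^ 3"
proof -
  have "0 < a + b + c" using assms by auto
  moreover have "0 < (a - b)\<^sup>2 + (b - c)\<^sup>2 + (c - a)\<^sup>2"
    using assms(4) sum_power2_gt_zero_iff[of "a - b" "b - c"] by (simp add: add_pos_nonneg)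
  ultimately have "0 < (a + b + c) * ((a - b)\<^sup>2 + (b - c)\<^sup>2 + (c - a)\<^sup>2)" by simp
  also have "\<dots> = 2 * (a ^ 3 + b ^ 3 + c ^ 3 - 3 * a * b * c)"
    by (simp add: algebra_simps power2_eq_square power3_eq_cube)
  finally show ?thesis by simp
qed

lemma bdd_above_image_atLeast_if_at_bot:
  fixes g :: "real \<Rightarrow> real"
  assumes "continuous_on {a..} g" and "filterlim g at_bot at_top"
  shows "bdd_above (g ` {a..})"
proof -
  obtain T where T: "\<And>t. t \<ge> T \<Longrightarrow> g t \<le> 0"
    using assms(2) unfolding filterlim_at_bot eventually_at_top_linorder by blast
  have "compact (g ` {a..max a T})"
    using assms(1) by (intro compact_continuous_image) (auto intro: continuous_on_subset)
  then have "bdd_above (g ` {a..max a T})"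
    by (intro bounded_imp_bdd_above compact_imp_bounded)
  moreover have "bdd_above (g ` {T..})"
    using T by (intro bdd_aboveI[of _ 0]) auto
  ultimately have "bdd_above (g ` ({a..max a T} \<union> {T..}))"
    by (simp add: image_Un)
  then show ?thesis
    by (rule bdd_above_mono) (auto intro: image_mono)
qed

lemma not_bdd_above_image_atLeast_if_at_top:
  fixes g :: "real \<Rightarrow> real"
  assumes "filterlim g at_top at_top"
  shows "\<not> bdd_above (g ` {a..})"
proof
  assume "bdd_above (g ` {a..})"
  then obtain M where M: "\<And>t. t \<ge> a \<Longrightarrow> g t \<le> M"
    by (auto simp: bdd_above_def)
  obtain N where "\<And>t. t \<ge> N \<Longrightarrow> M + 1 \<le> g t"
    using assms unfolding filterlim_at_top eventually_at_top_linorder by blast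
  then have "M + 1 \<le> g (max a N)" by simp
  with M[of "max a N"] show False by simp
qed

lemma bdd_above_cubic:
  fixes A B C D :: real
  assumes "A < 0"
  shows "bdd_above ((\<lambda>t. A * t ^ 3 + B * t\<^sup>2 + C * t + D) ` {0..})"
proof (rule bdd_above_image_atLeast_if_at_bot)
  show "continuous_on {0..} (\<lambda>t. A * t ^ 3 + B * t\<^sup>2 + C * t + D)"
    by (intro continuous_intros)
  show "filterlim (\<lambda>t. A * t ^ 3 + B * t\<^sup>2 + C * t + D) at_bot at_top"
    using assms by real_asymp
qed

lemma ray_eq_image: "ray x d = (\<lambda>t. x + t *\<^sub>R d) ` {0..}"
  by (auto simp: ray_def)

definition nonneg_orthant :: "(real^3) set" where
  "nonneg_orthant = {x. \<forall>i. 0 \<le> x $ i}"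

lemma rational_polyhedron_nonneg_orthant: "rational_polyhedron nonneg_orthant"
  unfolding rational_polyhedron_def
proof (intro exI conjI)
  define F where "F = (\<lambda>i. (- axis i 1 :: real^3, 0 :: real)) ` UNIV"
  show "finite F"
    unfolding F_def by simp
  show "\<forall>(a, b)\<in>F. rational_vec a \<and> b \<in> \<rat>"
    unfolding F_def rational_vec_def by (auto simp: axis_def)
  show "nonneg_orthant = {x. \<forall>(a, b)\<in>F. a \<bullet> x \<le> b}"
    unfolding F_def nonneg_orthant_def by (auto simp: inner_commute[of "axis _ _"] inner_axis)
qed

lemma rec_cone_nonneg_orthant: "rec_cone nonneg_orthant = nonneg_orthant"
proof
  show "rec_cone nonneg_orthant \<subseteq> nonneg_orthant"
  proof
    fix d assume "d \<in> rec_cone nonneg_orthant"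
    moreover have "0 \<in> nonneg_orthant"
      by (simp add: nonneg_orthant_def)
    ultimately have "0 + 1 *\<^sub>R d \<in> nonneg_orthant"
      unfolding rec_cone_def by (metis (no_types, lifting) mem_Collect_eq zero_le_one)
    then show "d \<in> nonneg_orthant" by simp
  qed
  show "nonneg_orthant \<subseteq> rec_cone nonneg_orthant"
    unfolding rec_cone_def nonneg_orthant_def by auto
qed

definition example_cubic :: "real^3 \<Rightarrow> real" where
  "example_cubic x =
     -2 * (x$1)^3 - (x$2)^3 + 6 * (x$1) * (x$2) * (x$3) - 4 * (x$3)^3 + (x$1) * (x$3)"

definition example_cubic_top :: "real^3 \<Rightarrow> real" where
  "example_cubic_top d = -2 * (d$1)^3 - (d$2)^3 + 6 * (d$1) * (d$2) * (d$3) - 4 * (d$3)^3"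

lemma cubic_poly_example_cubic: "cubic_poly example_cubic"
  unfolding cubic_poly_def
proof (intro exI conjI allI impI)
  define c :: "nat \<Rightarrow> nat \<Rightarrow> nat \<Rightarrow> real" where
    "c i j k = (if (i,j,k) = (3,0,0) then -2 else if (i,j,k) = (0,3,0) then -1
       else if (i,j,k) = (1,1,1) then 6 else if (i,j,k) = (0,0,3) then -4
       else if (i,j,k) = (1,0,1) then 1 else 0)" for i j k
  show "c i j k = 0" if "i + j + k > 3" for i j k
    using that unfolding c_def by auto
  show "3 + 0 + 0 = (3::nat)" by simp
  show "c 3 0 0 \<noteq> 0" unfolding c_def by simp
  show "example_cubic x = (\<Sum>i\<le>3. \<Sum>j\<le>3. \<Sum>k\<le>3. c i j k * (x$1)^i * (x$2)^j * (x$3)^k)" for x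
    unfolding example_cubic_def c_def by (simp add: numeral_3_eq_3 algebra_simps)
qed

lemma example_cubic_along_ray:
  "\<exists>B C. \<forall>t. example_cubic (y + t *\<^sub>R d) =
     example_cubic_top d * t ^ 3 + B * t\<^sup>2 + C * t + example_cubic y"
proof (intro exI allI)
  fix t
  show "example_cubic (y + t *\<^sub>R d) = example_cubic_top d * t ^ 3
    + (-6*(y$1)*(d$1)^2 - 3*(y$2)*(d$2)^2 + 6*((y$1)*(d$2)*(d$3) + (d$1)*(y$2)*(d$3) + (d$1)*(d$2)*(y$3))
       - 12*(y$3)*(d$3)^2 + (d$1)*(d$3)) * t\<^sup>2
    + (-6*(y$1)^2*(d$1) - 3*(y$2)^2*(d$2) + 6*((y$1)*(y$2)*(d$3) + (y$1)*(d$2)*(y$3) + (d$1)*(y$2)*(y$3))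
       - 12*(y$3)^2*(d$3) + (y$1)*(d$3) + (d$1)*(y$3)) * t
    + example_cubic y"
    unfolding example_cubic_def example_cubic_top_def
    by (simp add: algebra_simps power2_eq_square power3_eq_cube)
qed

lemma example_cubic_top_eq:
  fixes \<alpha> :: real
  assumes "\<alpha> ^ 3 = 2"
  shows "example_cubic_top d =
    3 * (d$2) * (\<alpha> * d$1) * (\<alpha>\<^sup>2 * d$3) - ((d$2)^3 + (\<alpha> * d$1)^3 + (\<alpha>\<^sup>2 * d$3)^3)"
proof -
  have "(\<alpha> * d$1)^3 = 2 * (d$1)^3" and "(\<alpha>\<^sup>2 * d$3)^3 = 4 * (d$3)^3"
    and "3 * (d$2) * (\<alpha> * d$1) * (\<alpha>\<^sup>2 * d$3) = 6 * (d$1) * (d$2) * (d$3)"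
    using assms by (simp_all add: power_mult_distrib power2_eq_square power3_eq_cube algebra_simps)
  then show ?thesis
    unfolding example_cubic_top_def by linarith
qed

lemma example_cubic_top_neg:
  assumes "d \<in> nonneg_orthant" and "d \<noteq> 0" and "rational_vec d"
  shows "example_cubic_top d < 0"
proof -
  define \<alpha> :: real where "\<alpha> = root 3 2"
  have \<alpha>: "\<alpha> ^ 3 = 2" "\<alpha> > 0"
    unfolding \<alpha>_def by simp_all
  have nonneg: "0 \<le> d$1" "0 \<le> d$2" "0 \<le> d$3"
    using assms(1) by (auto simp: nonneg_orthant_def)
  have "\<not> (d$2 = \<alpha> * d$1 \<and> \<alpha> * d$1 = \<alpha>\<^sup>2 * d$3)"
  proof
    assume eq: "d$2 = \<alpha> * d$1 \<and> \<alpha> * d$1 = \<alpha>\<^sup>2 * d$3"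
    show False
    proof (cases "d$1 = 0")
      case True
      with eq \<alpha>(2) have "d = 0"
        by (simp add: vec_eq_iff forall_3)
      with assms(2) show False ..
    next
      case False
      with eq have "\<alpha> = d$2 / d$1" by (simp add: field_simps)
      moreover have "d$2 / d$1 \<in> \<rat>"
        using assms(3) by (simp add: rational_vec_def)
      ultimately show False
        using prime_nth_root_not_rat[of 2 3 \<alpha>] \<alpha>(1) by simp
    qed
  qed
  then have "3 * (d$2) * (\<alpha> * d$1) * (\<alpha>\<^sup>2 * d$3) < (d$2)^3 + (\<alpha> * d$1)^3 + (\<alpha>\<^sup>2 * d$3)^3"
    using nonneg \<alpha>(2) by (intro three_mult_lt_sum_cubes) auto
  then show ?thesis
    unfolding example_cubic_top_eq[OF \<alpha>(1)] by linarith
qed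

lemma example_cubic_bdd_above_on_ray:
  assumes "example_cubic_top d < 0"
  shows "bdd_above (example_cubic ` ray y d)"
proof -
  obtain B C where eq: "\<And>t. example_cubic (y + t *\<^sub>R d) =
      example_cubic_top d * t ^ 3 + B * t\<^sup>2 + C * t + example_cubic y"
    using example_cubic_along_ray by blast
  have "example_cubic ` ray y d =
      (\<lambda>t. example_cubic_top d * t ^ 3 + B * t\<^sup>2 + C * t + example_cubic y) ` {0..}"
    unfolding ray_eq_image image_image eq ..
  with bdd_above_cubic[OF assms] show ?thesis by simp
qed

lemma example_cubic_unbounded_on_ray:
  defines "\<alpha> \<equiv> root 3 2"
  shows "unbounded_on example_cubic (ray 0 (vector [\<alpha>, \<alpha>\<^sup>2, 1]))"
proof -
  have \<alpha>: "\<alpha> ^ 3 = 2" "\<alpha> > 0"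
    unfolding \<alpha>_def by simp_all
  have eq: "example_cubic (0 + t *\<^sub>R vector [\<alpha>, \<alpha>\<^sup>2, 1]) = \<alpha> * t\<^sup>2" for t
  proof -
    have "example_cubic (0 + t *\<^sub>R vector [\<alpha>, \<alpha>\<^sup>2, 1])
        = -2*(t*\<alpha>)^3 - (t*\<alpha>\<^sup>2)^3 + 6*(t*\<alpha>)*(t*\<alpha>\<^sup>2)*t - 4*t^3 + (t*\<alpha>)*t"
      unfolding example_cubic_def by simp
    also have "\<dots> = t^3 * (4 * \<alpha>^3 - (\<alpha>^3)\<^sup>2 - 4) + \<alpha> * t\<^sup>2"
      by (simp add: power_mult_distrib power2_eq_square power3_eq_cube algebra_simps)
    finally show ?thesis using \<alpha>(1) by simp
  qed
  have "example_cubic ` ray 0 (vector [\<alpha>, \<alpha>\<^sup>2, 1]) = (\<lambda>t. \<alpha> * t\<^sup>2) ` {0..}"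
    unfolding ray_eq_image image_image eq ..
  moreover have "filterlim (\<lambda>t. \<alpha> * t\<^sup>2) at_top at_top"
    using \<alpha>(2) by real_asymp
  ultimately show ?thesis
    unfolding unbounded_on_def by (simp add: not_bdd_above_image_atLeast_if_at_top)
qed

theorem proposition1:
  shows "\<exists>(P :: (real^3) set) (f :: real^3 \<Rightarrow> real).
           rational_polyhedron P \<and> cubic_poly f \<and>
           (\<exists>x d. x \<in> P \<and> d \<in> rec_cone P \<and> d \<noteq> 0 \<and> unbounded_on f (ray x d)) \<and>
           (\<forall>y d. y \<in> P \<and> d \<in> rec_cone P \<and> d \<noteq> 0 \<and> unbounded_on f (ray y d)
                  \<longrightarrow> \<not> rational_vec d)"
proof -
  define \<alpha> :: real where "\<alpha> = root 3 2"
  define d\<^sub>0 :: "real^3" where "d\<^sub>0 = vector [\<alpha>, \<alpha>\<^sup>2, 1]"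
  show ?thesis
  proof (intro exI[of _ nonneg_orthant] exI[of _ example_cubic] conjI allI impI
      rational_polyhedron_nonneg_orthant cubic_poly_example_cubic)
    show "\<exists>x d. x \<in> nonneg_orthant \<and> d \<in> rec_cone nonneg_orthant \<and> d \<noteq> 0
      \<and> unbounded_on example_cubic (ray x d)"
    proof (intro exI conjI)
      show "(0 :: real^3) \<in> nonneg_orthant"
        by (simp add: nonneg_orthant_def)
      show "d\<^sub>0 \<in> rec_cone nonneg_orthant"
        unfolding rec_cone_nonneg_orthant by (auto simp: nonneg_orthant_def forall_3 d\<^sub>0_def \<alpha>_def)
      show "d\<^sub>0 \<noteq> 0"
        unfolding d\<^sub>0_def by (metis vector_3(3) zero_index zero_neq_one)
      show "unbounded_on example_cubic (ray 0 d\<^sub>0)"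
        unfolding d\<^sub>0_def \<alpha>_def by (rule example_cubic_unbounded_on_ray)
    qed
  next
    fix y d
    assume "y \<in> nonneg_orthant \<and> d \<in> rec_cone nonneg_orthant \<and> d \<noteq> 0
      \<and> unbounded_on example_cubic (ray y d)"
    then have d: "d \<in> nonneg_orthant" "d \<noteq> 0"
      and unbounded: "unbounded_on example_cubic (ray y d)"
      by (simp_all add: rec_cone_nonneg_orthant)
    show "\<not> rational_vec d"
    proof
      assume "rational_vec d"
      with d have "bdd_above (example_cubic ` ray y d)"
        by (intro example_cubic_bdd_above_on_ray example_cubic_top_neg)
      with unbounded show False
        by (simp add: unbounded_on_def)
    qed
  qed
qed

end
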